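(* For any finite simple graph $X$ and any update sequence $\pi\in S_X$ there exists a bijection $\psi:\mathcal{S}\to\mathcal{S}$ such that $\psi\circ\mathbf{F}^\uparrow_\pi=\mathbf{F}^\downarrow_\pi\circ\psi$; that is, $\mathbf{F}^\uparrow_\pi$ and $\mathbf{F}^\downarrow_\pi$ are topologically conjugate (their phase spaces are isomorphic as directed graphs).
   Context: Let $X$ be a finite simple graph with vertices $1,\dots,n$; $d(v)$ is the degree of $v$ and $n[v]$ the closed neighborhood of $v$. An extended vertex state is $s_v=(x_v,k_v)\in\{0,1\}\times\{1,\dots,d(v)+1\}$; $\mathcal{S}=\prod_v(\{0,1\}\times\{1,\dots,d(v)+1\})$. Let $\sigma(x[v])=|\{u\in n[v]:x_u=1\}|$. Both vertex functions set $x_v'=1$ iff $\sigma(x[v])\ge k_v$ (else $0$). Increasing: $k_v'=k_v+1$ if $x_v=0$ and $\sigma(x[v])\ge k_v$, else $k_v'=k_v$. Decreasing: $k_v'=k_v-1$ if $x_v=1$ and $\sigma(x[v])<k_v$, else $k_v'=k_v$. The local maps $F^\uparrow_v,F^\downarrow_v:\mathcal{S}\to\mathcal{S}$ update only coordinate $v$ by the respective rule. For a permutation $\pi=(\pi_1,\dots,\pi_n)$ of the vertices, $\mathbf{F}^\star_\pi=F^\star_{\pi_n}\circ\cdots\circ F^\star_{\pi_1}$ for $\star\in\{\uparrow,\downarrow\}$. *)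

theory Defs
  imports Main
begin

definition simple_graph :: "'a set \<Rightarrow> ('a \<Rightarrow> 'a \<Rightarrow> bool) \<Rightarrow> bool" where
  "simple_graph V E \<longleftrightarrow> finite V \<and> (\<forall>u v. E u v \<longrightarrow> u \<in> V \<and> v \<in> V)
     \<and> (\<forall>u v. E u v \<longrightarrow> E v u) \<and> (\<forall>v. \<not> E v v)"

definition deg :: "'a set \<Rightarrow> ('a \<Rightarrow> 'a \<Rightarrow> bool) \<Rightarrow> 'a \<Rightarrow> nat" where
  "deg V E v = card {u \<in> V. E v u}"

definition closed_nbhd :: "'a set \<Rightarrow> ('a \<Rightarrow> 'a \<Rightarrow> bool) \<Rightarrow> 'a \<Rightarrow> 'a set" where
  "closed_nbhd V E v = insert v {u \<in> V. E v u}"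

text \<open>A state assigns to each vertex a pair (x_v, k_v); x_v is encoded as a bool (True = 1).\<close>
type_synonym 'a state = "'a \<Rightarrow> bool \<times> nat"

definition sigma :: "'a set \<Rightarrow> ('a \<Rightarrow> 'a \<Rightarrow> bool) \<Rightarrow> 'a state \<Rightarrow> 'a \<Rightarrow> nat" where
  "sigma V E s v = card {u \<in> closed_nbhd V E v. fst (s u)}"

text \<open>The extended state space; states are extensional (fixed default outside V).\<close>
definition state_space :: "'a set \<Rightarrow> ('a \<Rightarrow> 'a \<Rightarrow> bool) \<Rightarrow> 'a state set" where
  "state_space V E = {s. (\<forall>v\<in>V. 1 \<le> snd (s v) \<and> snd (s v) \<le> deg V E v + 1)
                         \<and> (\<forall>v. v \<notin> V \<longrightarrow> s v = (False, 0))}"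

definition F_up :: "'a set \<Rightarrow> ('a \<Rightarrow> 'a \<Rightarrow> bool) \<Rightarrow> 'a \<Rightarrow> 'a state \<Rightarrow> 'a state" where
  "F_up V E v s = (let (x, k) = s v; \<sigma> = sigma V E s v in
     s(v := (k \<le> \<sigma>, if \<not> x \<and> k \<le> \<sigma> then k + 1 else k)))"

definition F_down :: "'a set \<Rightarrow> ('a \<Rightarrow> 'a \<Rightarrow> bool) \<Rightarrow> 'a \<Rightarrow> 'a state \<Rightarrow> 'a state" where
  "F_down V E v s = (let (x, k) = s v; \<sigma> = sigma V E s v in
     s(v := (k \<le> \<sigma>, if x \<and> \<sigma> < k then k - 1 else k)))"

text \<open>Sequential composition: for pi = [pi_1,...,pi_n], F_{pi_n} o ... o F_{pi_1}.\<close>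
definition seq_map :: "('a \<Rightarrow> 'a state \<Rightarrow> 'a state) \<Rightarrow> 'a list \<Rightarrow> 'a state \<Rightarrow> 'a state" where
  "seq_map F \<pi> = fold F \<pi>"

end

theory Submission
  imports Defs
begin

text \<open>The conjugacy is the involution \<open>\<psi>\<close> that complements every vertex state \<open>x\<^sub>v\<close> and
  reflects every threshold \<open>k\<^sub>v \<mapsto> d(v) + 2 - k\<^sub>v\<close>. Complementing turns \<open>\<sigma>(x[v])\<close> into
  \<open>d(v) + 1 - \<sigma>(x[v])\<close>, so the activation test \<open>\<sigma> \<ge> k\<close> becomes its negation after \<open>\<psi>\<close>,
  and the increasing rule (an inactive vertex activates, raising its threshold) is carried to
  the decreasing rule (an active vertex deactivates, lowering its threshold). Hence \<open>\<psi>\<close>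
  intertwines each pair of local maps \<open>F\<^sup>\<up>\<^sub>v\<close>, \<open>F\<^sup>\<down>\<^sub>v\<close>, and therefore every sequential
  composition of them.\<close>

definition dual_state :: "'a set \<Rightarrow> ('a \<Rightarrow> 'a \<Rightarrow> bool) \<Rightarrow> 'a state \<Rightarrow> 'a state" where
  "dual_state V E s =
     (\<lambda>u. if u \<in> V then (\<not> fst (s u), deg V E u + 2 - snd (s u)) else s u)"

lemma closed_nbhd_subset:
  "v \<in> V \<Longrightarrow> closed_nbhd V E v \<subseteq> V"
  by (auto simp: closed_nbhd_def)

lemma finite_closed_nbhd:
  "simple_graph V E \<Longrightarrow> v \<in> V \<Longrightarrow> finite (closed_nbhd V E v)"
  by (rule finite_subset[OF closed_nbhd_subset]) (simp_all add: simple_graph_def)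

lemma card_closed_nbhd:
  assumes "simple_graph V E"
  shows "card (closed_nbhd V E v) = deg V E v + 1"
proof -
  have "v \<notin> {u \<in> V. E v u}" and "finite V"
    using assms by (simp_all add: simple_graph_def)
  then show ?thesis by (simp add: closed_nbhd_def deg_def)
qed

lemma sigma_le_deg_Suc:
  assumes "simple_graph V E" and "v \<in> V"
  shows "sigma V E s v \<le> deg V E v + 1"
  unfolding sigma_def card_closed_nbhd[OF assms(1), symmetric]
  by (rule card_mono) (auto simp: finite_closed_nbhd[OF assms])

lemma sigma_le_deg_if_inactive:
  assumes "simple_graph V E" and "v \<in> V" and "\<not> fst (s v)"
  shows "sigma V E s v \<le> deg V E v"
proof -
  let ?N = "closed_nbhd V E v"
  have "v \<in> ?N" by (simp add: closed_nbhd_def)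
  then have "card (?N - {v}) = deg V E v"
    using card_closed_nbhd[OF assms(1)] finite_closed_nbhd[OF assms(1,2)] by simp
  moreover have "{u \<in> ?N. fst (s u)} \<subseteq> ?N - {v}" using assms(3) by auto
  ultimately show ?thesis
    unfolding sigma_def by (metis card_mono finite_Diff finite_closed_nbhd[OF assms(1,2)])
qed

lemma sigma_dual_state:
  assumes "simple_graph V E" and "v \<in> V"
  shows "sigma V E (dual_state V E s) v = deg V E v + 1 - sigma V E s v"
proof -
  let ?N = "closed_nbhd V E v"
  have "{u \<in> ?N. fst (dual_state V E s u)} = ?N - {u \<in> ?N. fst (s u)}"
    using closed_nbhd_subset[OF assms(2)] by (auto simp: dual_state_def)
  moreover have "card (?N - {u \<in> ?N. fst (s u)}) = card ?N - card {u \<in> ?N. fst (s u)}"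
    using finite_closed_nbhd[OF assms] by (intro card_Diff_subset) auto
  ultimately show ?thesis by (simp add: sigma_def card_closed_nbhd[OF assms(1)])
qed

lemma dual_state_in_state_space:
  "s \<in> state_space V E \<Longrightarrow> dual_state V E s \<in> state_space V E"
  by (auto simp: state_space_def dual_state_def)

lemma dual_state_dual_state:
  assumes "s \<in> state_space V E"
  shows "dual_state V E (dual_state V E s) = s"
proof
  fix u show "dual_state V E (dual_state V E s) u = s u"
    using assms by (cases "s u") (auto simp: state_space_def dual_state_def)
qed

lemma bij_betw_dual_state:
  "bij_betw (dual_state V E) (state_space V E) (state_space V E)"
  by (rule bij_betw_byWitness[where f' = "dual_state V E"])
    (auto simp: dual_state_in_state_space dual_state_dual_state)

lemma reflected_threshold_update:
  fixes d k \<sigma> :: nat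
  assumes "1 \<le> k" and "k \<le> d + 1" and "\<sigma> \<le> d + 1" and "\<not> x \<Longrightarrow> \<sigma> \<le> d"
  shows "(\<not> k \<le> \<sigma>, d + 2 - (if \<not> x \<and> k \<le> \<sigma> then k + 1 else k))
       = (d + 2 - k \<le> d + 1 - \<sigma>,
          if \<not> x \<and> d + 1 - \<sigma> < d + 2 - k then d + 2 - k - 1 else d + 2 - k)"
  using assms by auto

text \<open>A threshold is raised only when \<open>k \<le> \<sigma> \<le> d(v)\<close>, so it never leaves \<open>{1..d(v)+1}\<close>.\<close>

lemma F_up_in_state_space:
  assumes "simple_graph V E" and "v \<in> V" and "s \<in> state_space V E"
  shows "F_up V E v s \<in> state_space V E"
proof -
  obtain x k where sv: "s v = (x, k)" by fastforce
  have "\<not> x \<Longrightarrow> sigma V E s v \<le> deg V E v"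
    using sigma_le_deg_if_inactive[OF assms(1,2)] sv by simp
  then show ?thesis
    using assms(2,3) sv by (auto simp: state_space_def F_up_def Let_def)
qed

lemma dual_state_F_up:
  assumes "simple_graph V E" and "v \<in> V" and "s \<in> state_space V E"
  shows "dual_state V E (F_up V E v s) = F_down V E v (dual_state V E s)"
proof
  fix u
  show "dual_state V E (F_up V E v s) u = F_down V E v (dual_state V E s) u"
  proof (cases "u = v")
    case False
    then show ?thesis by (simp add: dual_state_def F_up_def F_down_def Let_def case_prod_beta)
  next
    case True
    obtain x k where sv: "s v = (x, k)" by fastforce
    define d where "d = deg V E v"
    define \<sigma> where "\<sigma> = sigma V E s v"
    have bounds: "1 \<le> k" "k \<le> d + 1" "\<sigma> \<le> d + 1" "\<not> x \<Longrightarrow> \<sigma> \<le> d"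
      using assms(2,3) sv sigma_le_deg_Suc[OF assms(1,2)] sigma_le_deg_if_inactive[OF assms(1,2)]
      by (auto simp: state_space_def d_def \<sigma>_def)
    have "dual_state V E (F_up V E v s) v
        = (\<not> k \<le> \<sigma>, d + 2 - (if \<not> x \<and> k \<le> \<sigma> then k + 1 else k))"
      using assms(2) sv by (simp add: dual_state_def F_up_def d_def \<sigma>_def)
    moreover have "dual_state V E s v = (\<not> x, d + 2 - k)"
      using assms(2) sv by (simp add: dual_state_def d_def)
    then have "F_down V E v (dual_state V E s) v
        = (d + 2 - k \<le> d + 1 - \<sigma>,
           if \<not> x \<and> d + 1 - \<sigma> < d + 2 - k then d + 2 - k - 1 else d + 2 - k)"
      using sigma_dual_state[OF assms(1,2)] by (simp add: F_down_def d_def \<sigma>_def)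
    ultimately show ?thesis
      using True reflected_threshold_update[OF bounds] by simp
  qed
qed

lemma dual_state_seq_map_F_up:
  assumes "simple_graph V E" and "set \<pi> \<subseteq> V" and "s \<in> state_space V E"
  shows "dual_state V E (seq_map (F_up V E) \<pi> s) = seq_map (F_down V E) \<pi> (dual_state V E s)"
  using assms(2,3)
proof (induction \<pi> arbitrary: s)
  case Nil
  then show ?case by (simp add: seq_map_def)
next
  case (Cons v \<pi>)
  then have "v \<in> V" by simp
  with Cons show ?case
    by (simp add: seq_map_def F_up_in_state_space[OF assms(1)] dual_state_F_up[OF assms(1)])
qed

theorem proposition3p4:
  fixes V :: "'a set" and E :: "'a \<Rightarrow> 'a \<Rightarrow> bool" and \<pi> :: "'a list"
  assumes "simple_graph V E"
    and "distinct \<pi>" and "set \<pi> = V"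
  shows "\<exists>\<psi>. bij_betw \<psi> (state_space V E) (state_space V E)
           \<and> (\<forall>s\<in>state_space V E.
                \<psi> (seq_map (F_up V E) \<pi> s) = seq_map (F_down V E) \<pi> (\<psi> s))"
proof (intro exI conjI ballI)
  show "bij_betw (dual_state V E) (state_space V E) (state_space V E)"
    by (rule bij_betw_dual_state)
  show "dual_state V E (seq_map (F_up V E) \<pi> s) = seq_map (F_down V E) \<pi> (dual_state V E s)"
    if "s \<in> state_space V E" for s
    using dual_state_seq_map_F_up[OF assms(1)] assms(3) that by simp
qed

end
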